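(* Let $n\ge2$ and $Q\in SU_n$ with eigenvalues $\mu_1,\dots,\mu_n$ (with multiplicity) ordered so that $\arg(\mu_1)\le\cdots\le\arg(\mu_n)$, and let $\zeta(Q):=\frac1{2\pi}\sum_{j=1}^n\arg(\mu_j)\in\mathbb{Z}$. Let $W_Q:=\{\underline{k}=(k_1,\dots,k_n)\in\mathbb{Z}^n:\sum_{j=1}^nk_j=-\zeta(Q)\}$, $\psi_Q:W_Q\to\mathbb{R}$, $\psi_Q(\underline{k})=\sum_{j=1}^n(\arg(\mu_j)+2k_j\pi)^2$, $\Delta_Q(\underline{k}):=\max\{k_1,\dots,k_n\}-\min\{k_1,\dots,k_n\}$, $Z_Q:=\{\underline{k}\in W_Q:\Delta_Q(\underline{k})\le1\}$, and $m(Q):=\min\{\psi_Q(\underline{k}):\underline{k}\in W_Q\}$. Then $\psi_Q(\underline{k})>m(Q)$ for every $\underline{k}\in W_Q\setminus Z_Q$; consequently $m(Q)=\min\{\psi_Q(\underline{k}):\underline{k}\in Z_Q\}$.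
   Context: $SU_n$ is the special unitary group and $\arg(z)\in(-\pi,\pi]$ the principal argument. (The quantity $m(Q)$ coincides with $\min\{\mathrm{tr}(XX^* ):X\in\mathfrak{su}_n,\ \exp(X)=Q\}$.) *)

theory Defs
  imports "HOL-Analysis.Analysis" "Jordan_Normal_Form.Schur_Decomposition"
begin

definition SU :: "nat \<Rightarrow> complex mat set" where
  "SU n = {Q \<in> carrier_mat n n. Q * mat_adjoint Q = 1\<^sub>m n \<and> mat_adjoint Q * Q = 1\<^sub>m n \<and> det Q = 1}"

definition eigenvalue_list :: "complex mat \<Rightarrow> complex list \<Rightarrow> bool" where
  "eigenvalue_list Q mu \<longleftrightarrow> length mu = dim_row Q \<and>
     char_poly Q = (\<Prod>a\<leftarrow>mu. [:- a, 1:])"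

definition zeta :: "complex list \<Rightarrow> real" where
  "zeta mu = (\<Sum>j<length mu. Arg (mu ! j)) / (2 * pi)"

definition W :: "complex list \<Rightarrow> int list set" where
  "W mu = {k. length k = length mu \<and> real_of_int (sum_list k) = - zeta mu}"

definition psi :: "complex list \<Rightarrow> int list \<Rightarrow> real" where
  "psi mu k = (\<Sum>j<length mu. (Arg (mu ! j) + 2 * real_of_int (k ! j) * pi)\<^sup>2)"

definition Delta :: "int list \<Rightarrow> int" where
  "Delta k = Max (set k) - Min (set k)"

definition Z :: "complex list \<Rightarrow> int list set" where
  "Z mu = {k \<in> W mu. Delta k \<le> 1}"

definition m_val :: "complex list \<Rightarrow> real" where
  "m_val mu = Inf (psi mu ` W mu)"

end

theory Submission
  imports Defs
begin

(* The eigenvalues multiply to det Q = 1, so their arguments sum to a multiple of 2 pi and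
   zeta is an integer.  If an integer vector k in W has entries k_i >= k_j + 2, moving one
   unit from k_i to k_j keeps the sum and changes psi by
   4 pi ((Arg mu_j - Arg mu_i) + 2 pi (k_j - k_i + 1)), which is negative because two
   principal arguments differ by less than 2 pi.  As psi has finite sublevel sets, its
   infimum over W is attained, and by the above only at points of Z. *)

lemma sum_list_list_update:
  fixes xs :: "'a::ab_group_add list"
  assumes "i < length xs"
  shows "sum_list (xs[i := x]) = sum_list xs - xs ! i + x"
  using assms by (induction xs arbitrary: i) (auto split: nat.split)

lemma ex_min_if_finite_sublevel:
  fixes f :: "'a \<Rightarrow> 'b::linorder"
  assumes "a \<in> A" and "finite {x \<in> A. f x \<le> f a}"
  shows "\<exists>x\<in>A. \<forall>y\<in>A. f x \<le> f y"
proof -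
  let ?S = "{x \<in> A. f x \<le> f a}"
  have "?S \<noteq> {}" using assms(1) by auto
  then obtain x where "is_arg_min f (\<lambda>x. x \<in> ?S) x"
    using ex_is_arg_min_if_finite[OF assms(2)] by blast
  then have x: "x \<in> ?S" and x_min: "\<And>y. y \<in> ?S \<Longrightarrow> \<not> f y < f x"
    unfolding is_arg_min_def by auto
  have "f x \<le> f y" if "y \<in> A" for y
    using x x_min[of y] that by (cases "f y \<le> f a") auto
  then show ?thesis using x by blast
qed

lemma abs_le_if_Max_minus_Min_le_1:
  fixes k :: "int list"
  assumes spread: "Max (set k) - Min (set k) \<le> 1" and x: "x \<in> set k"
  shows "\<bar>x\<bar> \<le> \<bar>sum_list k\<bar> + 1"
proof -
  define lo where "lo = Min (set k)"
  define hi where "hi = Max (set k)"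
  have "lo \<le> x" "x \<le> hi" "hi \<le> lo + 1"
    using x spread unfolding lo_def hi_def by auto
  have len: "int (length k) \<ge> 1" using x by (cases k) auto
  have "int (length k) * lo \<le> sum_list k"
    using sum_list_mono[of k "\<lambda>_. lo" id] by (simp add: lo_def sum_list_triv)
  moreover have "sum_list k \<le> int (length k) * hi"
    using sum_list_mono[of k id "\<lambda>_. hi"] by (simp add: hi_def sum_list_triv)
  moreover have "int (length k) * lo \<ge> lo" if "lo \<ge> 0"
    using mult_right_mono[OF len that] by simp
  moreover have "int (length k) * hi \<le> hi" if "hi \<le> 0"
    using mult_right_mono_neg[OF len that] by simp
  ultimately show ?thesis
    using \<open>lo \<le> x\<close> \<open>x \<le> hi\<close> \<open>hi \<le> lo + 1\<close> by linarith
qed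

lemma poly_prod_linear_factors_0:
  "poly (\<Prod>a\<leftarrow>mu. [:- a, 1:]) 0 = (-1) ^ length mu * prod_list (mu :: complex list)"
  by (induction mu) auto

lemma prod_list_eigenvalue_list:
  assumes Q: "Q \<in> carrier_mat n n" and mu: "eigenvalue_list Q mu"
  shows "prod_list mu = det Q"
proof -
  have len: "length mu = n" using mu Q unfolding eigenvalue_list_def by auto
  have "poly (char_poly Q) 0 = det (- char_matrix Q 0)" by (rule char_poly_matrix[OF Q])
  also have "char_matrix Q 0 = Q" unfolding char_matrix_def using Q by auto
  also have "- Q = (-1) \<cdot>\<^sub>m Q" using Q by (intro eq_matI) auto
  also have "det ((-1) \<cdot>\<^sub>m Q) = (-1) ^ n * det Q" using Q by simp
  finally have "(-1) ^ n * prod_list mu = (-1) ^ n * det Q"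
    using mu len unfolding eigenvalue_list_def by (simp add: poly_prod_linear_factors_0)
  then show ?thesis by simp
qed

lemma zeta_in_Ints_if_prod_list_eq_1:
  assumes prod: "prod_list mu = 1"
  shows "zeta mu \<in> \<int>"
proof -
  have nonzero: "mu ! j \<noteq> 0" if "j < length mu" for j
    using prod that by (metis nth_mem prod_list_zero_iff zero_neq_one)
  have "prod_list mu = (\<Prod>j<length mu. exp (Ln (mu ! j)))"
    using nonzero by (simp add: prod.list_conv_set_nth lessThan_atLeast0)
  also have "\<dots> = exp (\<Sum>j<length mu. Ln (mu ! j))" by (simp add: exp_sum)
  finally obtain c :: int where c: "Im (\<Sum>j<length mu. Ln (mu ! j)) = of_int (2 * c) * pi"
    using prod exp_eq_1 by metis
  have "(\<Sum>j<length mu. Arg (mu ! j)) = Im (\<Sum>j<length mu. Ln (mu ! j))"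
    using nonzero by (simp add: Im_sum Arg_eq_Im_Ln)
  then have "zeta mu = of_int c" unfolding zeta_def using c by simp
  then show ?thesis by simp
qed

lemma W_nonempty:
  assumes "zeta mu \<in> \<int>" and "mu \<noteq> []"
  shows "W mu \<noteq> {}"
proof -
  obtain c where c: "zeta mu = of_int c" using assms(1) Ints_cases by blast
  have "(- c) # replicate (length mu - 1) 0 \<in> W mu"
    using assms(2) c unfolding W_def by (auto simp: sum_list_replicate)
  then show ?thesis by blast
qed

lemma finite_Z: "finite (Z mu)"
proof -
  define B where "B = \<lceil>\<bar>zeta mu\<bar>\<rceil> + 1"
  have "set k \<subseteq> {-B..B}" if "k \<in> Z mu" for k
  proof
    fix x assume "x \<in> set k"
    have "of_int \<bar>sum_list k\<bar> = \<bar>zeta mu\<bar>"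
      using that unfolding Z_def W_def by simp
    then have "\<bar>sum_list k\<bar> + 1 \<le> B" unfolding B_def by linarith
    with abs_le_if_Max_minus_Min_le_1[OF _ \<open>x \<in> set k\<close>] that show "x \<in> {-B..B}"
      unfolding Z_def Delta_def by fastforce
  qed
  then have "Z mu \<subseteq> {k. set k \<subseteq> {-B..B} \<and> length k = length mu}"
    unfolding Z_def W_def by blast
  then show ?thesis by (rule finite_subset) (simp add: finite_lists_length_eq)
qed

lemma abs_le_if_psi_le:
  assumes len: "length k = length mu" and le: "psi mu k \<le> C" and x: "x \<in> set k"
  shows "\<bar>x\<bar> \<le> \<lceil>(sqrt C + pi) / (2 * pi)\<rceil>"
proof -
  obtain j where j: "j < length mu" and x_eq: "x = k ! j"
    using x len by (auto simp: in_set_conv_nth)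
  define a where "a = Arg (mu ! j)"
  have "(a + 2 * of_int x * pi)\<^sup>2 \<le> psi mu k"
    unfolding psi_def a_def x_eq using j by (intro member_le_sum) auto
  then have "\<bar>a + 2 * of_int x * pi\<bar> \<le> sqrt C"
    using le real_sqrt_le_mono[of "(a + 2 * of_int x * pi)\<^sup>2" C] by simp
  moreover have "\<bar>a\<bar> \<le> pi"
    unfolding a_def using Arg_le_pi[of "mu ! j"] mpi_less_Arg[of "mu ! j"] by auto
  ultimately have "\<bar>of_int x\<bar> * (2 * pi) \<le> sqrt C + pi" by (simp add: abs_mult)
  then have "of_int \<bar>x\<bar> \<le> (sqrt C + pi) / (2 * pi)" by (simp add: pos_le_divide_eq)
  then show ?thesis by linarith
qed

lemma finite_psi_sublevel: "finite {k. length k = length mu \<and> psi mu k \<le> C}"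
proof -
  define B where "B = \<lceil>(sqrt C + pi) / (2 * pi)\<rceil>"
  have "{k. length k = length mu \<and> psi mu k \<le> C} \<subseteq> {k. set k \<subseteq> {-B..B} \<and> length k = length mu}"
    using abs_le_if_psi_le unfolding B_def by fastforce
  then show ?thesis by (rule finite_subset) (simp add: finite_lists_length_eq)
qed

lemma psi_list_update:
  assumes "length k = length mu" and "i < length mu"
  shows "psi mu (k[i := x]) = psi mu k
    - (Arg (mu ! i) + 2 * of_int (k ! i) * pi)\<^sup>2 + (Arg (mu ! i) + 2 * of_int x * pi)\<^sup>2"
proof -
  define f where "f l y = (Arg (mu ! l) + 2 * of_int y * pi)\<^sup>2" for l y
  have "psi mu (k[i := x]) = (\<Sum>l<length mu. f l (k ! l) + (if l = i then f i x - f i (k ! i) else 0))"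
    unfolding psi_def f_def using assms by (intro sum.cong) (auto simp: nth_list_update)
  also have "\<dots> = psi mu k - f i (k ! i) + f i x"
    using assms(2) by (simp add: sum.distrib psi_def f_def)
  finally show ?thesis unfolding f_def .
qed

lemma psi_transfer_less:
  assumes len: "length k = length mu" and i: "i < length mu" and j: "j < length mu"
    and gap: "k ! j + 2 \<le> k ! i"
  shows "psi mu (k[i := k ! i - 1, j := k ! j + 1]) < psi mu k"
proof -
  define a where "a l = Arg (mu ! l)" for l
  have "i \<noteq> j" using gap by auto
  then have "psi mu (k[i := k ! i - 1, j := k ! j + 1]) - psi mu k
      = (a i + 2 * of_int (k ! i - 1) * pi)\<^sup>2 - (a i + 2 * of_int (k ! i) * pi)\<^sup>2
      + (a j + 2 * of_int (k ! j + 1) * pi)\<^sup>2 - (a j + 2 * of_int (k ! j) * pi)\<^sup>2"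
    using len i j by (simp add: psi_list_update a_def)
  also have "\<dots> = 4 * pi * ((a j - a i) + 2 * pi * (of_int (k ! j - k ! i) + 1))"
    by (simp add: power2_eq_square algebra_simps)
  also have "\<dots> < 0"
  proof -
    have "a j - a i < 2 * pi"
      unfolding a_def using Arg_le_pi[of "mu ! j"] mpi_less_Arg[of "mu ! i"] by linarith
    moreover have "2 * pi * (of_int (k ! j - k ! i) + 1) \<le> 2 * pi * (-1)"
      using gap by (intro mult_left_mono) auto
    ultimately show ?thesis by (simp add: mult_pos_neg)
  qed
  finally show ?thesis by simp
qed

lemma psi_not_minimal_outside_Z:
  assumes "mu \<noteq> []" \<comment> \<open>otherwise \<open>Delta [] = Max {} - Min {}\<close> is unspecified\<close>
    and "k \<in> W mu - Z mu"
  shows "\<exists>k'\<in>W mu. psi mu k' < psi mu k"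
proof -
  have kW: "k \<in> W mu" and spread: "Max (set k) - Min (set k) > 1"
    using assms unfolding Z_def Delta_def by auto
  have len: "length k = length mu" using kW unfolding W_def by auto
  have "set k \<noteq> {}" using len assms(1) by auto
  then obtain i j where i: "i < length mu" "k ! i = Max (set k)"
    and j: "j < length mu" "k ! j = Min (set k)"
    using len by (metis Max_in Min_in finite_set in_set_conv_nth)
  have "i \<noteq> j" using spread i j by auto
  define k' where "k' = k[i := k ! i - 1, j := k ! j + 1]"
  have "sum_list k' = sum_list k"
    unfolding k'_def using len i j \<open>i \<noteq> j\<close> by (simp add: sum_list_list_update nth_list_update)
  then have "k' \<in> W mu" using kW unfolding W_def k'_def by simp
  moreover have "psi mu k' < psi mu k"
    unfolding k'_def using spread i j by (intro psi_transfer_less[OF len]) auto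
  ultimately show ?thesis by blast
qed

theorem lemma2p6:
  fixes n :: nat and Q :: "complex mat" and mu :: "complex list"
  assumes "n \<ge> 2"
    and "Q \<in> SU n"
    and "eigenvalue_list Q mu"
    and "sorted_wrt (\<lambda>a b. Arg a \<le> Arg b) mu"
  shows "zeta mu \<in> \<int>
    \<and> (\<exists>k\<in>W mu. psi mu k = m_val mu)
    \<and> (\<forall>k \<in> W mu - Z mu. psi mu k > m_val mu)
    \<and> m_val mu = Min (psi mu ` Z mu)"
proof -
  have Q: "Q \<in> carrier_mat n n" and "det Q = 1" using assms(2) unfolding SU_def by auto
  then have zeta: "zeta mu \<in> \<int>"
    using prod_list_eigenvalue_list[OF Q assms(3)] zeta_in_Ints_if_prod_list_eq_1 by simp
  have "length mu = n" using assms(3) Q unfolding eigenvalue_list_def by simp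
  then have "mu \<noteq> []" using assms(1) by auto
  then obtain k0 where "k0 \<in> W mu" using W_nonempty[OF zeta] by blast
  moreover have "finite {k \<in> W mu. psi mu k \<le> psi mu k0}"
    by (rule finite_subset[OF _ finite_psi_sublevel]) (auto simp: W_def)
  ultimately obtain kmin where kmin: "kmin \<in> W mu"
    and min: "\<And>k. k \<in> W mu \<Longrightarrow> psi mu kmin \<le> psi mu k"
    using ex_min_if_finite_sublevel by metis
  have m_val: "m_val mu = psi mu kmin"
    unfolding m_val_def using kmin min by (intro cInf_eq_minimum) auto
  have outside_Z: "psi mu k > m_val mu" if "k \<in> W mu - Z mu" for k
    using psi_not_minimal_outside_Z[OF \<open>mu \<noteq> []\<close> that] min m_val by (metis le_less_trans)
  then have "kmin \<in> Z mu" using kmin m_val by auto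
  then have "Min (psi mu ` Z mu) = psi mu kmin"
    using finite_Z min unfolding Z_def by (intro Min_eqI) auto
  then show ?thesis using zeta kmin m_val outside_Z by auto
qed

end
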